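(* Let $n,m$ be integers with $0<m<n$. Then for every $k=1,\ldots,n$ and $x\in[-1,1]$, $$\tilde\varphi_{n,k}^m(x)=\sqrt{\frac{\pi}{n}}\sum_{h=1}^n\left[\sum_{r=0}^{n-1}\frac{p_r(x_k^n)p_r(x_h^n)}{\sqrt{\nu_{n,r}^m}}\right]\Phi_{n,h}^m(x).$$
   Context: The orthonormal Chebyshev polynomials are $p_0(x)=\sqrt{1/\pi}$ and $p_r(x)=\sqrt{2/\pi}\cos(r\arccos x)$ for $r\ge1$, $x\in[-1,1]$. The Chebyshev nodes are $x_k^n=\cos\frac{(2k-1)\pi}{2n}$, $k=1,\ldots,n$. For $0<m<n$ set $\mu_{n,r}^m=1$ if $0\le r\le n-m$, $\mu_{n,r}^m=\frac{m+n-r}{2m}$ if $n-m<r<n+m$, and $\mu_{n,r}^m=0$ otherwise. The interpolating VP scaling functions are $\Phi_{n,k}^m(x)=\frac{\pi}{n}\sum_{r=0}^{n+m-1}\mu_{n,r}^m p_r(x_k^n)p_r(x)$, $k=1,\ldots,n$. For $r=0,\ldots,n-1$ define $q_{n,r}^m=p_r$ if $0\le r\le n-m$, and $q_{n,r}^m=\mu_{n,r}^m p_r-\mu_{n,2n-r}^m p_{2n-r}$ if $n-m<r<n$; set $\nu_{n,r}^m=1$ if $0\le r\le n-m$ and $\nu_{n,r}^m=\frac{m^2+(n-r)^2}{2m^2}$ if $n-m<r<n$. The orthonormal VP scaling functions are $\tilde\varphi_{n,k}^m(x)=\sum_{r=0}^{n-1}\sqrt{\frac{\pi}{n\,\nu_{n,r}^m}}\,p_r(x_k^n)\,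 q_{n,r}^m(x)$, $k=1,\ldots,n$. *)

theory Defs
  imports "HOL-Analysis.Analysis"
begin

definition cheb_p :: "nat \<Rightarrow> real \<Rightarrow> real" where
  "cheb_p r x = (if r = 0 then sqrt (1 / pi) else sqrt (2 / pi) * cos (real r * arccos x))"

definition cheb_node :: "nat \<Rightarrow> nat \<Rightarrow> real" where
  "cheb_node n k = cos ((2 * real k - 1) * pi / (2 * real n))"

definition mu :: "nat \<Rightarrow> nat \<Rightarrow> nat \<Rightarrow> real" where
  "mu n m r = (if r \<le> n - m then 1
               else if n - m < r \<and> r < n + m then (real m + real n - real r) / (2 * real m)
               else 0)"

definition Phi :: "nat \<Rightarrow> nat \<Rightarrow> nat \<Rightarrow> real \<Rightarrow> real" where
  "Phi n m k x = pi / real n * (\<Sum>r = 0..n + m - 1. mu n m r * cheb_p r (cheb_node n k) * cheb_p r x)"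

definition q :: "nat \<Rightarrow> nat \<Rightarrow> nat \<Rightarrow> real \<Rightarrow> real" where
  "q n m r x = (if r \<le> n - m then cheb_p r x
                else mu n m r * cheb_p r x - mu n m (2 * n - r) * cheb_p (2 * n - r) x)"

definition nu :: "nat \<Rightarrow> nat \<Rightarrow> nat \<Rightarrow> real" where
  "nu n m r = (if r \<le> n - m then 1
               else (real m ^ 2 + (real n - real r) ^ 2) / (2 * real m ^ 2))"

definition phi_tilde :: "nat \<Rightarrow> nat \<Rightarrow> nat \<Rightarrow> real \<Rightarrow> real" where
  "phi_tilde n m k x = (\<Sum>r = 0..n - 1. sqrt (pi / (real n * nu n m r)) * cheb_p r (cheb_node n k) * q n m r x)"

end

theory Submission
  imports Defs
begin

text \<open>
  On the Chebyshev nodes the polynomials satisfy the discrete orthogonality relation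
  \<open>\<Sum>\<^sub>h p\<^sub>r(x\<^sub>h) p\<^sub>s(x\<^sub>h) = n/\<pi> ([s = r] - [s = 2n - r])\<close> for \<open>r < n\<close> and \<open>s < 2n\<close>.
  Since \<open>\<Phi>\<^sub>h(x)\<close> is a Chebyshev expansion in \<open>p\<^sub>s(x)\<close>, \<open>s < n + m \<le> 2n\<close>, with coefficients
  \<open>(\<pi>/n) \<mu>\<^sub>s p\<^sub>s(x\<^sub>h)\<close>, it follows that \<open>\<Sum>\<^sub>h p\<^sub>r(x\<^sub>h) \<Phi>\<^sub>h(x) = q\<^sub>r(x)\<close>: the aliased index
  \<open>s = 2n - r\<close> produces exactly the second summand of \<open>q\<^sub>r\<close>. Exchanging the sums over \<open>h\<close>
  and \<open>r\<close> on the right-hand side then gives the defining expansion of \<open>phi_tilde\<close>. The identity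
  holds for all real \<open>x\<close>.
\<close>

lemma sin_times_sum_cos_odd_multiples:
  "2 * sin a * (\<Sum>h = 1..N. cos ((2 * real h - 1) * a)) = sin (2 * real N * a)"
proof (induction N)
  case 0
  then show ?case by simp
next
  case (Suc N)
  have "sin (2 * real (Suc N) * a) - sin (2 * real N * a)
      = sin ((2 * real (Suc N) - 1) * a + a) - sin ((2 * real (Suc N) - 1) * a - a)"
    by (simp add: algebra_simps)
  also have "\<dots> = 2 * sin a * cos ((2 * real (Suc N) - 1) * a)"
    by (simp add: sin_add sin_diff)
  finally show ?case
    using Suc.IH by (simp add: distrib_left)
qed

definition cheb_angle :: "nat \<Rightarrow> nat \<Rightarrow> real" where
  "cheb_angle n h = (2 * real h - 1) * pi / (2 * real n)"

lemma arccos_cheb_node: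
  assumes "1 \<le> h" "h \<le> n"
  shows "arccos (cheb_node n h) = cheb_angle n h"
proof -
  have "(2 * real h - 1) * pi \<le> 2 * real n * pi"
    using assms by (intro mult_right_mono) auto
  then have "cheb_angle n h \<le> pi"
    using assms by (simp add: cheb_angle_def divide_le_eq mult.commute)
  moreover have "0 \<le> cheb_angle n h"
    using assms by (simp add: cheb_angle_def)
  ultimately show ?thesis
    by (simp add: cheb_node_def cheb_angle_def[symmetric] arccos_cos)
qed

lemma cheb_p_cheb_node:
  assumes "1 \<le> h" "h \<le> n"
  shows "cheb_p r (cheb_node n h) =
    (if r = 0 then sqrt (1 / pi) else sqrt (2 / pi)) * cos (real r * cheb_angle n h)"
  using assms by (simp add: cheb_p_def arccos_cheb_node)

lemma sum_cos_cheb_angle: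
  assumes "0 < n"
  shows "(\<Sum>h = 1..n. cos (real j * cheb_angle n h)) =
    (if 2 * n dvd j then (-1) ^ (j div (2 * n)) * real n else 0)"
proof (cases "2 * n dvd j")
  case True
  then obtain c where j: "j = 2 * n * c" by blast
  have "cos (real j * cheb_angle n h) = (-1) ^ c" if "h \<in> {1..n}" for h
  proof -
    have "real j * cheb_angle n h = real ((2 * h - 1) * c) * pi"
      using that assms by (simp add: j cheb_angle_def)
    moreover have "(-1 :: real) ^ (2 * h - 1) = -1"
      using that by (simp add: odd_pos)
    ultimately show ?thesis
      by (simp only: cos_npi power_mult)
  qed
  then show ?thesis
    using True assms by (simp add: j)
next
  case False
  define a where "a = real j * pi / (2 * real n)"
  have "sin a \<noteq> 0"
  proof
    assume "sin a = 0"
    then obtain i :: int where "a = of_int i * pi"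
      by (auto simp: sin_zero_iff_int2)
    then have "real_of_int (int j) = real_of_int (2 * int n * i)"
      using assms by (simp add: a_def field_simps)
    then have "int (2 * n) dvd int j"
      unfolding of_int_eq_iff by simp
    then show False
      using False by (simp only: int_dvd_int_iff)
  qed
  moreover have "2 * sin a * (\<Sum>h = 1..n. cos ((2 * real h - 1) * a)) = 0"
  proof -
    have "2 * real n * a = real j * pi"
      using assms by (simp add: a_def)
    then show ?thesis
      by (simp only: sin_times_sum_cos_odd_multiples sin_npi)
  qed
  ultimately show ?thesis
    using False by (simp add: a_def cheb_angle_def ac_simps)
qed

lemma sum_cos_cheb_angle_below_4n:
  assumes "0 < n" "j < 4 * n"
  shows "(\<Sum>h = 1..n. cos (real j * cheb_angle n h)) =
    real n * (of_bool (j = 0) - of_bool (j = 2 * n))"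
proof -
  have "2 * n dvd j \<longleftrightarrow> j = 0 \<or> j = 2 * n"
  proof
    assume "2 * n dvd j"
    then obtain c where j: "j = 2 * n * c" ..
    with assms have "c < 2" by simp
    then have "c = 0 \<or> c = 1" by linarith
    then show "j = 0 \<or> j = 2 * n" by (auto simp: j)
  qed auto
  then show ?thesis
    using sum_cos_cheb_angle[OF assms(1), of j] assms(1) by auto
qed

lemma sum_cos_mult_cos_cheb_angle:
  assumes "0 < n" "r < 2 * n" "s < 2 * n"
  shows "(\<Sum>h = 1..n. cos (real r * cheb_angle n h) * cos (real s * cheb_angle n h)) =
    real n / 2 * (of_bool (r = s) + of_bool (r + s = 0) - of_bool (r + s = 2 * n))"
  using assms
proof (induction r s rule: linorder_wlog)
  case (le s r)
  have "cos (real r * t) * cos (real s * t) = (cos (real (r - s) * t) + cos (real (r + s) * t)) / 2"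
    for t
    using le by (simp add: cos_times_cos algebra_simps)
  then have "(\<Sum>h = 1..n. cos (real r * cheb_angle n h) * cos (real s * cheb_angle n h)) =
    ((\<Sum>h = 1..n. cos (real (r - s) * cheb_angle n h)) +
     (\<Sum>h = 1..n. cos (real (r + s) * cheb_angle n h))) / 2"
    by (simp only: sum.distrib flip: sum_divide_distrib)
  also have "(\<Sum>h = 1..n. cos (real (r - s) * cheb_angle n h)) = real n * of_bool (r = s)"
    using le sum_cos_cheb_angle_below_4n[of n "r - s"] by auto
  also have "(\<Sum>h = 1..n. cos (real (r + s) * cheb_angle n h)) =
      real n * (of_bool (r + s = 0) - of_bool (r + s = 2 * n))"
    by (rule sum_cos_cheb_angle_below_4n) (use le in auto)
  finally show ?case
    by (auto simp: algebra_simps)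
next
  case (sym r s)
  then show ?case
    by (simp add: ac_simps eq_commute[of r s])
qed

lemma sum_cheb_p_mult_cheb_p_cheb_node:
  assumes "r < n" "s < 2 * n"
  shows "(\<Sum>h = 1..n. cheb_p r (cheb_node n h) * cheb_p s (cheb_node n h)) =
    real n / pi * (of_bool (s = r) - of_bool (s = 2 * n - r))"
proof -
  define w where "w j = (if j = 0 then sqrt (1 / pi) else sqrt (2 / pi))" for j :: nat
  have "(\<Sum>h = 1..n. cheb_p r (cheb_node n h) * cheb_p s (cheb_node n h)) =
      w r * w s * (\<Sum>h = 1..n. cos (real r * cheb_angle n h) * cos (real s * cheb_angle n h))"
    by (simp add: sum_distrib_left cheb_p_cheb_node w_def ac_simps)
  also have "\<dots> = w r * w s * (real n / 2 *
      (of_bool (r = s) + of_bool (r + s = 0) - of_bool (r + s = 2 * n)))"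
    using assms by (subst sum_cos_mult_cos_cheb_angle) auto
  also have "\<dots> = real n / pi * (of_bool (s = r) - of_bool (s = 2 * n - r))"
    using assms by (auto simp: w_def real_sqrt_mult[symmetric])
  finally show ?thesis .
qed

lemma q_eq_mu_diff:
  assumes "m \<le> n" "r < n"
  shows "q n m r x = mu n m r * cheb_p r x - mu n m (2 * n - r) * cheb_p (2 * n - r) x"
  using assms by (auto simp: q_def mu_def)

lemma sum_cheb_p_cheb_node_mult_Phi:
  assumes "m < n" "r < n"
  shows "(\<Sum>h = 1..n. cheb_p r (cheb_node n h) * Phi n m h x) = q n m r x"
proof -
  let ?S = "{0..n + m - 1}"
  have "(\<Sum>h = 1..n. cheb_p r (cheb_node n h) * Phi n m h x) =
      pi / real n * (\<Sum>s\<in>?S. mu n m s * cheb_p s x *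
        (\<Sum>h = 1..n. cheb_p r (cheb_node n h) * cheb_p s (cheb_node n h)))"
    unfolding Phi_def
    by (simp add: sum_distrib_left sum_distrib_right ac_simps) (rule sum.swap)
  also have "\<dots> = pi / real n * (\<Sum>s\<in>?S. mu n m s * cheb_p s x *
        (real n / pi * (of_bool (s = r) - of_bool (s = 2 * n - r))))"
    using assms
    by (intro arg_cong[where f = "(*) _"] sum.cong refl sum_cheb_p_mult_cheb_p_cheb_node) auto
  also have "\<dots> = (\<Sum>s\<in>?S. mu n m s * cheb_p s x * (of_bool (s = r) - of_bool (s = 2 * n - r)))"
    using assms by (simp add: sum_distrib_left mult.assoc)
  also have "\<dots> = mu n m r * cheb_p r x - (\<Sum>s\<in>?S \<inter> {2 * n - r}. mu n m s * cheb_p s x)"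
    using assms by (simp add: right_diff_distrib sum_subtractf)
  also have "\<dots> = mu n m r * cheb_p r x - mu n m (2 * n - r) * cheb_p (2 * n - r) x"
    using assms by (auto simp: mu_def)
  also have "\<dots> = q n m r x"
    using assms by (simp add: q_eq_mu_diff)
  finally show ?thesis .
qed

theorem proposition2:
  fixes n m k :: nat and x :: real
  assumes "0 < m" and "m < n" and "1 \<le> k" and "k \<le> n"
    and "-1 \<le> x" and "x \<le> 1"
  shows "phi_tilde n m k x =
    sqrt (pi / real n) * (\<Sum>h = 1..n.
      (\<Sum>r = 0..n - 1. cheb_p r (cheb_node n k) * cheb_p r (cheb_node n h) / sqrt (nu n m r))
      * Phi n m h x)"
proof -
  have "phi_tilde n m k x =
      sqrt (pi / real n) * (\<Sum>r = 0..n - 1. cheb_p r (cheb_node n k) / sqrt (nu n m r) * q n m r x)"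
    unfolding phi_tilde_def by (simp add: sum_distrib_left real_sqrt_divide real_sqrt_mult mult.assoc)
  also have "\<dots> = sqrt (pi / real n) * (\<Sum>r = 0..n - 1.
      cheb_p r (cheb_node n k) / sqrt (nu n m r) * (\<Sum>h = 1..n. cheb_p r (cheb_node n h) * Phi n m h x))"
    using assms
    by (intro arg_cong[where f = "(*) _"] sum.cong refl sum_cheb_p_cheb_node_mult_Phi[symmetric]) auto
  also have "\<dots> = sqrt (pi / real n) * (\<Sum>h = 1..n.
      (\<Sum>r = 0..n - 1. cheb_p r (cheb_node n k) * cheb_p r (cheb_node n h) / sqrt (nu n m r))
      * Phi n m h x)"
    by (simp add: sum_distrib_left sum_distrib_right ac_simps) (rule sum.swap)
  finally show ?thesis .
qed

end
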